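(* Let $c\in(0,1)$ and $C\ge1$ be constants such that for all $n\ge1$, all integers $0\le w\le cn$ and all integers $0\le i\le n/2$, one has $|K^{(n)}_w(i)|\le C\binom nw\left(1-\frac{2w}{n}\right)^i$. Let $\mathcal{C}\subseteq\mathbb{F}_2^n$ be a binary linear code with $\mathcal{C}^\perp\neq\{0\}$, and let $d^\perp<n/2$ be the dual distance of $\mathcal{C}$ (the minimum Hamming weight of a nonzero vector of $\mathcal{C}^\perp$); put $t^\perp=\lfloor(d^\perp-1)/2\rfloor$. Let $w$ be an integer with $0\le w\le cn$, let $\varepsilon>0$, and let $\rho$ be a pmf on $\mathbb{F}_2^n$ satisfying $d_{TV}(P_{\mathcal{C}^\perp}\ast\rho,P_{U_n})\le\varepsilon$. Then $$\frac{1}{\binom nw}\sum_{x:|x|=w}2^n\hat\rho(x)\le\frac{|\mathcal{C}^\perp|V_n(t^\perp)}{2^{n-1}}+Cn\left(1-\frac{2w}{n}\right)^{t^\perp}+2\varepsilon.$$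
   Context: Krawtchouk polynomial: $K^{(n)}_w(i)=\sum_{j=0}^w(-1)^j\binom ij\binom{n-i}{w-j}$. The Fourier transform of $f:\mathbb{F}_2^n\to\mathbb{R}$ is $\hat f(y)=2^{-n}\sum_{x\in\mathbb{F}_2^n}f(x)(-1)^{x^\intercal y}$. $|x|$ is Hamming weight; $P_{\mathcal{C}^\perp}$ is the uniform pmf on the dual code $\mathcal{C}^\perp$; $P_{U_n}$ is uniform on $\mathbb{F}_2^n$; $(f\ast g)(x)=\sum_y f(y)g(x-y)$; $V_n(t)=\sum_{j=0}^t\binom nj$; $d_{TV}(P,Q)=\frac12\sum_x|P(x)-Q(x)|$. *)

theory Defs
  imports Complex_Main
begin

text \<open>Vectors of F_2^n are represented as functions nat => bool vanishing (False) outside {0..<n};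
  addition in F_2 is exclusive or.\<close>

definition vecs :: "nat \<Rightarrow> (nat \<Rightarrow> bool) set" where
  "vecs n = {x. \<forall>i. n \<le> i \<longrightarrow> \<not> x i}"

definition vzero :: "nat \<Rightarrow> bool" where
  "vzero = (\<lambda>i. False)"

definition vadd :: "(nat \<Rightarrow> bool) \<Rightarrow> (nat \<Rightarrow> bool) \<Rightarrow> (nat \<Rightarrow> bool)" where
  "vadd x y = (\<lambda>i. x i \<noteq> y i)"

definition vsub :: "(nat \<Rightarrow> bool) \<Rightarrow> (nat \<Rightarrow> bool) \<Rightarrow> (nat \<Rightarrow> bool)" where
  "vsub x y = vadd x y"

definition hweight :: "nat \<Rightarrow> (nat \<Rightarrow> bool) \<Rightarrow> nat" where
  "hweight n x = card {i. i < n \<and> x i}"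

definition chr :: "nat \<Rightarrow> (nat \<Rightarrow> bool) \<Rightarrow> (nat \<Rightarrow> bool) \<Rightarrow> real" where
  "chr n x y = (-1) ^ card {i. i < n \<and> x i \<and> y i}"

definition linear_code :: "nat \<Rightarrow> (nat \<Rightarrow> bool) set \<Rightarrow> bool" where
  "linear_code n C \<longleftrightarrow> C \<subseteq> vecs n \<and> vzero \<in> C \<and> (\<forall>x\<in>C. \<forall>y\<in>C. vadd x y \<in> C)"

definition dual_code :: "nat \<Rightarrow> (nat \<Rightarrow> bool) set \<Rightarrow> (nat \<Rightarrow> bool) set" where
  "dual_code n C = {y \<in> vecs n. \<forall>x\<in>C. even (card {i. i < n \<and> x i \<and> y i})}"

definition dual_distance :: "nat \<Rightarrow> (nat \<Rightarrow> bool) set \<Rightarrow> nat" where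
  "dual_distance n C = Min (hweight n ` (dual_code n C - {vzero}))"

definition krawtchouk :: "nat \<Rightarrow> nat \<Rightarrow> nat \<Rightarrow> real" where
  "krawtchouk n w i = (\<Sum>j = 0..w. (-1) ^ j * real (i choose j) * real ((n - i) choose (w - j)))"

definition fourier :: "nat \<Rightarrow> ((nat \<Rightarrow> bool) \<Rightarrow> real) \<Rightarrow> (nat \<Rightarrow> bool) \<Rightarrow> real" where
  "fourier n f y = (1 / 2 ^ n) * (\<Sum>x\<in>vecs n. f x * chr n x y)"

definition conv :: "nat \<Rightarrow> ((nat \<Rightarrow> bool) \<Rightarrow> real) \<Rightarrow> ((nat \<Rightarrow> bool) \<Rightarrow> real) \<Rightarrow> (nat \<Rightarrow> bool) \<Rightarrow> real" where
  "conv n f g x = (\<Sum>y\<in>vecs n. f y * g (vsub x y))"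

definition is_pmf :: "nat \<Rightarrow> ((nat \<Rightarrow> bool) \<Rightarrow> real) \<Rightarrow> bool" where
  "is_pmf n p \<longleftrightarrow> (\<forall>x. p x \<ge> 0) \<and> (\<forall>x. x \<notin> vecs n \<longrightarrow> p x = 0) \<and> (\<Sum>x\<in>vecs n. p x) = 1"

definition unif_on :: "(nat \<Rightarrow> bool) set \<Rightarrow> (nat \<Rightarrow> bool) \<Rightarrow> real" where
  "unif_on S x = (if x \<in> S then 1 / real (card S) else 0)"

definition dTV :: "nat \<Rightarrow> ((nat \<Rightarrow> bool) \<Rightarrow> real) \<Rightarrow> ((nat \<Rightarrow> bool) \<Rightarrow> real) \<Rightarrow> real" where
  "dTV n P Q = (1 / 2) * (\<Sum>x\<in>vecs n. \<bar>P x - Q x\<bar>)"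

definition hball_vol :: "nat \<Rightarrow> nat \<Rightarrow> nat" where
  "hball_vol n t = (\<Sum>j = 0..t. n choose j)"

end

theory Submission
  imports Defs
begin

text \<open>Expanding the Fourier transform, the left-hand side is \<open>\<Sum>\<^sub>y \<rho>(y) K\<^sub>w(|y|) / (n choose w)\<close>.
  Let \<open>N\<close> be the union of the translates by \<open>C\<^sup>\<perp>\<close> of the set of vectors within distance \<open>t\<close>
  of \<open>0\<close> or of the all-ones vector. For \<open>y \<notin> N\<close> we have \<open>t < |y| < n - t\<close>, so the reflection
  \<open>K\<^sub>w(n - i) = \<plusminus>K\<^sub>w(i)\<close> and the assumed decay give \<open>|K\<^sub>w(|y|)| \<le> C (n choose w) (1 - 2w/n)\<^sup>t\<close>.
  On \<open>N\<close> only the trivial bound \<open>n choose w\<close> is used; but \<open>N\<close> is invariant under \<open>C\<^sup>\<perp>\<close>, so its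
  \<open>\<rho>\<close>-mass equals its mass under \<open>P\<^sub>C\<^sub>\<perp> \<ast> \<rho>\<close>, which is within \<open>2\<epsilon>\<close> of its uniform mass
  \<open>|N|/2\<^sup>n \<le> |C\<^sup>\<perp>| 2 V\<^sub>n(t) / 2\<^sup>n\<close>. The dual distance enters only through \<open>t\<close>: the bound holds
  for every \<open>t\<close>.\<close>

lemma krawtchouk_eq_sum_subsets:
  fixes U Y :: "nat set"
  assumes "finite U" "Y \<subseteq> U"
  shows "(\<Sum>X\<in>{X. X \<subseteq> U \<and> card X = w}. (-1::real) ^ card (X \<inter> Y)) = krawtchouk (card U) w (card Y)"
proof -
  define Z where "Z = U - Y"
  have fY: "finite Y" and fZ: "finite Z" using assms finite_subset Z_def by auto
  have cZ: "card Z = card U - card Y" using card_Diff_subset assms fY Z_def by auto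
  define S where "S = Sigma {0..w} (\<lambda>j. {A. A \<subseteq> Y \<and> card A = j} \<times> {B. B \<subseteq> Z \<and> card B = w - j})"
  have "(\<Sum>X\<in>{X. X \<subseteq> U \<and> card X = w}. (-1::real) ^ card (X \<inter> Y)) = (\<Sum>p\<in>S. (-1::real) ^ fst p)"
  proof (rule sum.reindex_bij_witness[where i="\<lambda>(j, A, B). A \<union> B" and j="\<lambda>X. (card (X \<inter> Y), X \<inter> Y, X \<inter> Z)"])
    fix X assume X: "X \<in> {X. X \<subseteq> U \<and> card X = w}"
    then have "finite X" using assms finite_subset by auto
    moreover have "X = (X \<inter> Y) \<union> (X \<inter> Z)" "(X \<inter> Y) \<inter> (X \<inter> Z) = {}" using X Z_def by auto
    ultimately have "card X = card (X \<inter> Y) + card (X \<inter> Z)" by (metis card_Un_disjoint finite_Int)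
    then show "(card (X \<inter> Y), X \<inter> Y, X \<inter> Z) \<in> S" using X unfolding S_def by auto
  next
    fix p assume "p \<in> S"
    then obtain j A B where p: "p = (j, A, B)" and A: "A \<subseteq> Y" "card A = j"
      and B: "B \<subseteq> Z" "card B = w - j" and j: "j \<le> w"
      unfolding S_def by auto
    have "card (A \<union> B) = card A + card B"
      using A B finite_subset[OF A(1) fY] finite_subset[OF B(1) fZ] Z_def by (intro card_Un_disjoint) auto
    then show "(case p of (j, A, B) \<Rightarrow> A \<union> B) \<in> {X. X \<subseteq> U \<and> card X = w}"
      using p A B j Z_def assms(2) by auto
    have "(A \<union> B) \<inter> Y = A" "(A \<union> B) \<inter> Z = B" using A B Z_def by auto
    then show "(\<lambda>X. (card (X \<inter> Y), X \<inter> Y, X \<inter> Z)) (case p of (j, A, B) \<Rightarrow> A \<union> B) = p"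
      using p A by simp
  qed (use Z_def in auto)
  also have "\<dots> = (\<Sum>j\<in>{0..w}. \<Sum>q\<in>{A. A \<subseteq> Y \<and> card A = j} \<times> {B. B \<subseteq> Z \<and> card B = w - j}. (-1::real) ^ j)"
    unfolding S_def by (subst sum.Sigma) (use fY fZ in \<open>auto simp: split_def\<close>)
  also have "\<dots> = (\<Sum>j\<in>{0..w}. (-1::real) ^ j * real (card Y choose j) * real (card Z choose (w - j)))"
    by (rule sum.cong) (simp_all add: card_cartesian_product n_subsets fY fZ)
  finally show ?thesis unfolding krawtchouk_def cZ by simp
qed

lemma krawtchouk_eq_sum_subsets_lessThan:
  "i \<le> n \<Longrightarrow> krawtchouk n w i = (\<Sum>X\<in>{X. X \<subseteq> {..<n} \<and> card X = w}. (-1::real) ^ card (X \<inter> {..<i}))"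
  using krawtchouk_eq_sum_subsets[of "{..<n}" "{..<i}" w] by simp

lemma abs_krawtchouk_le_binomial:
  assumes "i \<le> n"
  shows "\<bar>krawtchouk n w i\<bar> \<le> real (n choose w)"
proof -
  have "\<bar>krawtchouk n w i\<bar> \<le> (\<Sum>X\<in>{X. X \<subseteq> {..<n} \<and> card X = w}. \<bar>(-1::real) ^ card (X \<inter> {..<i})\<bar>)"
    unfolding krawtchouk_eq_sum_subsets_lessThan[OF assms] by (rule sum_abs)
  also have "\<dots> = real (n choose w)" using n_subsets[of "{..<n}" w] by simp
  finally show ?thesis .
qed

lemma krawtchouk_reflect:
  assumes "i \<le> n"
  shows "krawtchouk n w (n - i) = (-1) ^ w * krawtchouk n w i"
proof -
  let ?S = "{X. X \<subseteq> {..<n} \<and> card X = w}"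
  have "krawtchouk n w (n - i) = (\<Sum>X\<in>?S. (-1::real) ^ card (X \<inter> {i..<n}))"
    using krawtchouk_eq_sum_subsets[of "{..<n}" "{i..<n}" w] assms by (auto simp: subset_iff)
  also have "\<dots> = (\<Sum>X\<in>?S. (-1) ^ w * (-1::real) ^ card (X \<inter> {..<i}))"
  proof (rule sum.cong)
    fix X assume X: "X \<in> ?S"
    have "finite X" using X finite_subset by auto
    have "X = (X \<inter> {i..<n}) \<union> (X \<inter> {..<i})" using X by auto
    then have "card X = card ((X \<inter> {i..<n}) \<union> (X \<inter> {..<i}))" by (rule arg_cong)
    also have "\<dots> = card (X \<inter> {i..<n}) + card (X \<inter> {..<i})"
      using \<open>finite X\<close> by (intro card_Un_disjoint) auto
    finally have "w = card (X \<inter> {i..<n}) + card (X \<inter> {..<i})" using X by simp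
    then show "(-1::real) ^ card (X \<inter> {i..<n}) = (-1) ^ w * (-1) ^ card (X \<inter> {..<i})"
      by (simp add: power_add mult.assoc flip: power_mult_distrib)
  qed simp
  also have "\<dots> = (-1) ^ w * krawtchouk n w i"
    by (simp add: krawtchouk_eq_sum_subsets_lessThan[OF assms] sum_distrib_left)
  finally show ?thesis .
qed

lemma abs_krawtchouk_le_of_reflected_decay:
  fixes A q :: real
  assumes decay: "\<And>j. real j \<le> real n / 2 \<Longrightarrow> \<bar>krawtchouk n w j\<bar> \<le> A * q ^ j"
    and "0 \<le> A" "0 \<le> q" "q \<le> 1" and "t < i" "i + t < n"
  shows "\<bar>krawtchouk n w i\<bar> \<le> A * q ^ t"
proof -
  have half: "\<bar>krawtchouk n w j\<bar> \<le> A * q ^ t" if "t < j" "real j \<le> real n / 2" for j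
  proof -
    have "\<bar>krawtchouk n w j\<bar> \<le> A * q ^ j" using decay that(2) .
    also have "\<dots> \<le> A * q ^ t"
      using assms(2-4) that(1) by (intro mult_left_mono power_decreasing) auto
    finally show ?thesis .
  qed
  show ?thesis
  proof (cases "real i \<le> real n / 2")
    case True
    then show ?thesis using half \<open>t < i\<close> by blast
  next
    case False
    have "\<bar>krawtchouk n w i\<bar> = \<bar>krawtchouk n w (n - i)\<bar>"
      using krawtchouk_reflect[of "n - i" n w] \<open>i + t < n\<close> by (simp add: abs_mult)
    also have "\<dots> \<le> A * q ^ t"
      using False \<open>i + t < n\<close> by (intro half) (auto simp: of_nat_diff)
    finally show ?thesis .
  qed
qed

lemma krawtchouk_decay_ratio_nonneg:
  fixes A :: real
  assumes decay: "\<And>j. real j \<le> real n / 2 \<Longrightarrow> \<bar>krawtchouk n w j\<bar> \<le> A * (1 - 2 * real w / real n) ^ j"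
    and "0 < A" "w < n"
  shows "0 \<le> 1 - 2 * real w / real n"
proof (cases "n = 1")
  case True
  then show ?thesis using \<open>w < n\<close> by simp
next
  case False
  then have "real 1 \<le> real n / 2" using \<open>w < n\<close> by simp
  from decay[OF this] have "0 \<le> A * (1 - 2 * real w / real n)" by simp
  then show ?thesis using \<open>0 < A\<close> by (simp add: zero_le_mult_iff)
qed

definition vec_of_set :: "nat set \<Rightarrow> nat \<Rightarrow> bool" where
  "vec_of_set X = (\<lambda>i. i \<in> X)"

lemma inj_vec_of_set: "inj vec_of_set"
  by (rule injI) (simp add: vec_of_set_def fun_eq_iff set_eq_iff)

lemma vecs_eq_image_Pow: "vecs n = vec_of_set ` Pow {..<n}"
proof
  show "vecs n \<subseteq> vec_of_set ` Pow {..<n}"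
  proof
    fix x assume "x \<in> vecs n"
    then have "x = vec_of_set {i. i < n \<and> x i}"
      unfolding vecs_def vec_of_set_def by (auto simp: fun_eq_iff not_le[symmetric])
    then show "x \<in> vec_of_set ` Pow {..<n}" by blast
  qed
qed (auto simp: vecs_def vec_of_set_def)

lemma finite_vecs: "finite (vecs n)"
  by (simp add: vecs_eq_image_Pow)

lemma card_vecs: "card (vecs n) = 2 ^ n"
  by (simp add: vecs_eq_image_Pow card_image inj_on_subset[OF inj_vec_of_set] card_Pow)

lemma hweight_le: "hweight n x \<le> n"
  unfolding hweight_def by (rule order.trans[OF card_mono[of "{..<n}"]]) auto

lemma vecs_weight_eq_image:
  "{x \<in> vecs n. hweight n x = w} = vec_of_set ` {X. X \<subseteq> {..<n} \<and> card X = w}"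
proof -
  have "hweight n (vec_of_set X) = card X" if "X \<subseteq> {..<n}" for X
  proof -
    have "{i. i < n \<and> vec_of_set X i} = X" using that by (auto simp: vec_of_set_def)
    then show ?thesis by (simp add: hweight_def)
  qed
  then show ?thesis unfolding vecs_eq_image_Pow by fastforce
qed

lemma card_vecs_weight: "card {x \<in> vecs n. hweight n x = w} = n choose w"
  by (simp add: vecs_weight_eq_image card_image inj_on_subset[OF inj_vec_of_set] n_subsets)

lemma sum_chr_vecs_weight:
  "(\<Sum>x\<in>{x \<in> vecs n. hweight n x = w}. chr n y x) = krawtchouk n w (hweight n y)"
proof -
  let ?Y = "{i. i < n \<and> y i}"
  have "(\<Sum>x\<in>{x \<in> vecs n. hweight n x = w}. chr n y x)
      = (\<Sum>X\<in>{X. X \<subseteq> {..<n} \<and> card X = w}. chr n y (vec_of_set X))"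
    unfolding vecs_weight_eq_image by (rule sum.reindex_cong[OF inj_on_subset[OF inj_vec_of_set]]) auto
  also have "\<dots> = (\<Sum>X\<in>{X. X \<subseteq> {..<n} \<and> card X = w}. (-1::real) ^ card (X \<inter> ?Y))"
  proof (rule sum.cong)
    fix X assume "X \<in> {X. X \<subseteq> {..<n} \<and> card X = w}"
    then have "{i. i < n \<and> y i \<and> vec_of_set X i} = X \<inter> ?Y" unfolding vec_of_set_def by auto
    then show "chr n y (vec_of_set X) = (-1::real) ^ card (X \<inter> ?Y)" unfolding chr_def by simp
  qed simp
  also have "\<dots> = krawtchouk n w (hweight n y)"
    using krawtchouk_eq_sum_subsets[of "{..<n}" ?Y w] unfolding hweight_def by auto
  finally show ?thesis .
qed

lemma sum_fourier_vecs_weight: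
  "(\<Sum>x\<in>{x \<in> vecs n. hweight n x = w}. 2 ^ n * fourier n f x)
     = (\<Sum>y\<in>vecs n. f y * krawtchouk n w (hweight n y))"
proof -
  have "(\<Sum>x\<in>{x \<in> vecs n. hweight n x = w}. 2 ^ n * fourier n f x)
      = (\<Sum>x\<in>{x \<in> vecs n. hweight n x = w}. \<Sum>y\<in>vecs n. f y * chr n y x)"
    unfolding fourier_def by simp
  also have "\<dots> = (\<Sum>y\<in>vecs n. f y * (\<Sum>x\<in>{x \<in> vecs n. hweight n x = w}. chr n y x))"
    by (subst sum.swap) (simp add: sum_distrib_left)
  finally show ?thesis by (simp add: sum_chr_vecs_weight)
qed

definition vcompl :: "nat \<Rightarrow> (nat \<Rightarrow> bool) \<Rightarrow> nat \<Rightarrow> bool" where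
  "vcompl n y = (\<lambda>i. i < n \<and> \<not> y i)"

lemma vcompl_in_vecs: "vcompl n y \<in> vecs n"
  unfolding vcompl_def vecs_def by auto

lemma hweight_vcompl: "hweight n (vcompl n y) = n - hweight n y"
proof -
  have "{i. i < n \<and> vcompl n y i} = {..<n} - {i. i < n \<and> y i}" unfolding vcompl_def by auto
  then show ?thesis unfolding hweight_def by (simp add: card_Diff_subset subset_iff)
qed

lemma inj_on_vcompl: "inj_on (vcompl n) (vecs n)"
proof (rule inj_onI)
  fix x y assume "x \<in> vecs n" "y \<in> vecs n" "vcompl n x = vcompl n y"
  show "x = y"
  proof
    fix i
    show "x i = y i"
      using \<open>x \<in> vecs n\<close> \<open>y \<in> vecs n\<close> fun_cong[OF \<open>vcompl n x = vcompl n y\<close>, of i]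
      unfolding vecs_def vcompl_def by (cases "i < n") auto
  qed
qed

lemma card_hamming_ball: "card {y \<in> vecs n. hweight n y \<le> t} = hball_vol n t"
proof -
  have "{y \<in> vecs n. hweight n y \<le> t} = (\<Union>j\<in>{0..t}. {y \<in> vecs n. hweight n y = j})" by auto
  also have "card \<dots> = (\<Sum>j\<in>{0..t}. card {y \<in> vecs n. hweight n y = j})"
    by (rule card_UN_disjoint) (auto simp: finite_vecs)
  finally show ?thesis by (simp add: card_vecs_weight hball_vol_def)
qed

definition two_sided_ball :: "nat \<Rightarrow> nat \<Rightarrow> (nat \<Rightarrow> bool) set" where
  "two_sided_ball n t = {y \<in> vecs n. hweight n y \<le> t \<or> n - t \<le> hweight n y}"

lemma card_two_sided_ball: "card (two_sided_ball n t) \<le> 2 * hball_vol n t"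
proof -
  let ?B = "{y \<in> vecs n. hweight n y \<le> t}" and ?B' = "{y \<in> vecs n. n - t \<le> hweight n y}"
  have "card ?B' \<le> card ?B"
  proof (rule card_inj_on_le[where f = "vcompl n"])
    show "inj_on (vcompl n) ?B'" by (rule inj_on_subset[OF inj_on_vcompl]) auto
    show "vcompl n ` ?B' \<subseteq> ?B" using hweight_vcompl vcompl_in_vecs by auto
  qed (simp add: finite_vecs)
  moreover have "two_sided_ball n t = ?B \<union> ?B'" unfolding two_sided_ball_def by auto
  ultimately show ?thesis using card_Un_le[of ?B ?B'] card_hamming_ball[of n t] by simp
qed

lemma vadd_in_vecs: "x \<in> vecs n \<Longrightarrow> y \<in> vecs n \<Longrightarrow> vadd x y \<in> vecs n"
  unfolding vecs_def vadd_def by auto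

lemma vadd_vzero [simp]: "vadd x vzero = x"
  unfolding vadd_def vzero_def by simp

lemma vadd_vadd_cancel [simp]: "vadd (vadd x c) c = x"
  unfolding vadd_def by auto

lemma vadd_vadd_eq: "vadd (vadd x a) (vadd a b) = vadd x b"
  unfolding vadd_def by auto

lemma vzero_in_dual_code: "vzero \<in> dual_code n C"
  unfolding dual_code_def vzero_def vecs_def by simp

lemma dual_code_subset_vecs: "dual_code n C \<subseteq> vecs n"
  unfolding dual_code_def by auto

lemma finite_dual_code: "finite (dual_code n C)"
  using finite_subset[OF dual_code_subset_vecs finite_vecs] .

lemma even_card_symdiff_iff:
  assumes "finite A" "finite B"
  shows "even (card ((A - B) \<union> (B - A))) \<longleftrightarrow> even (card A + card B)"
proof -
  have "card A = card (A - B) + card (A \<inter> B)" "card B = card (B - A) + card (A \<inter> B)"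
    using card_Int_Diff[OF assms(1), of B] card_Int_Diff[OF assms(2), of A] by (simp_all add: Int_commute)
  moreover have "card ((A - B) \<union> (B - A)) = card (A - B) + card (B - A)"
    using assms by (intro card_Un_disjoint) auto
  ultimately show ?thesis by presburger
qed

lemma vadd_in_dual_code:
  assumes "a \<in> dual_code n C" "b \<in> dual_code n C"
  shows "vadd a b \<in> dual_code n C"
  unfolding dual_code_def
proof (intro CollectI conjI ballI)
  show "vadd a b \<in> vecs n" using assms dual_code_subset_vecs vadd_in_vecs by blast
  fix x assume "x \<in> C"
  let ?A = "{i. i < n \<and> x i \<and> a i}" and ?B = "{i. i < n \<and> x i \<and> b i}"
  have "{i. i < n \<and> x i \<and> vadd a b i} = (?A - ?B) \<union> (?B - ?A)" unfolding vadd_def by auto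
  moreover have "even (card ?A)" "even (card ?B)" using assms \<open>x \<in> C\<close> unfolding dual_code_def by auto
  ultimately show "even (card {i. i < n \<and> x i \<and> vadd a b i})"
    using even_card_symdiff_iff[of ?A ?B] by simp
qed

lemma conv_unif_on:
  assumes "finite D" "D \<subseteq> vecs n"
  shows "conv n (unif_on D) f x = (\<Sum>c\<in>D. f (vadd x c)) / real (card D)"
proof -
  have "conv n (unif_on D) f x = (\<Sum>y\<in>vecs n. if y \<in> D then f (vadd x y) / real (card D) else 0)"
    unfolding conv_def unif_on_def vsub_def by (rule sum.cong) auto
  also have "\<dots> = (\<Sum>y\<in>D. f (vadd x y) / real (card D))"
    using assms by (simp add: sum.If_cases finite_vecs Int_absorb1)
  finally show ?thesis by (simp add: sum_divide_distrib)
qed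

lemma sum_conv_unif_on_invariant:
  assumes "finite D" "D \<noteq> {}" "D \<subseteq> vecs n" "finite N"
    and invariant: "\<And>x c. x \<in> N \<Longrightarrow> c \<in> D \<Longrightarrow> vadd x c \<in> N"
  shows "(\<Sum>x\<in>N. conv n (unif_on D) f x) = (\<Sum>x\<in>N. f x)"
proof -
  have shift: "(\<Sum>x\<in>N. f (vadd x c)) = (\<Sum>x\<in>N. f x)" if "c \<in> D" for c
    by (rule sum.reindex_bij_witness[where i = "\<lambda>x. vadd x c" and j = "\<lambda>x. vadd x c"])
      (use invariant that in auto)
  have "(\<Sum>x\<in>N. conv n (unif_on D) f x) = (\<Sum>c\<in>D. \<Sum>x\<in>N. f (vadd x c)) / real (card D)"
    using assms(1,3) by (simp add: conv_unif_on sum_divide_distrib[symmetric] sum.swap[of _ N])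
  also have "\<dots> = (\<Sum>x\<in>N. f x)"
    using assms(1,2) by (simp add: shift)
  finally show ?thesis .
qed

lemma sum_le_sum_plus_dTV:
  assumes "A \<subseteq> vecs n"
  shows "(\<Sum>x\<in>A. P x) \<le> (\<Sum>x\<in>A. Q x) + 2 * dTV n P Q"
proof -
  have "(\<Sum>x\<in>A. P x) - (\<Sum>x\<in>A. Q x) \<le> (\<Sum>x\<in>A. \<bar>P x - Q x\<bar>)"
    by (simp add: sum_subtractf[symmetric] sum_mono)
  also have "\<dots> \<le> (\<Sum>x\<in>vecs n. \<bar>P x - Q x\<bar>)"
    by (rule sum_mono2[OF finite_vecs assms]) simp
  finally show ?thesis unfolding dTV_def by simp
qed

lemma sum_unif_on_vecs:
  assumes "A \<subseteq> vecs n"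
  shows "(\<Sum>x\<in>A. unif_on (vecs n) x) = real (card A) / 2 ^ n"
  using assms by (simp add: unif_on_def card_vecs subset_iff)

definition translates :: "nat \<Rightarrow> (nat \<Rightarrow> bool) set \<Rightarrow> (nat \<Rightarrow> bool) set \<Rightarrow> (nat \<Rightarrow> bool) set" where
  "translates n D B = {x \<in> vecs n. \<exists>c\<in>D. vadd x c \<in> B}"

lemma card_translates_le:
  assumes fin: "finite D" "finite B"
  shows "card (translates n D B) \<le> card D * card B"
proof -
  have "translates n D B \<subseteq> (\<lambda>(c, b). vadd b c) ` (D \<times> B)"
  proof
    fix x assume "x \<in> translates n D B"
    then obtain c where "c \<in> D" "vadd x c \<in> B" unfolding translates_def by auto
    then show "x \<in> (\<lambda>(c, b). vadd b c) ` (D \<times> B)" by (intro image_eqI[where x = "(c, vadd x c)"]) auto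
  qed
  then have "card (translates n D B) \<le> card ((\<lambda>(c, b). vadd b c) ` (D \<times> B))"
    using fin by (intro card_mono) auto
  also have "\<dots> \<le> card (D \<times> B)" by (rule card_image_le) (use fin in simp)
  finally show ?thesis by (simp add: card_cartesian_product)
qed

text \<open>Translation invariance makes the \<open>f\<close>-mass of the set equal to its \<open>P\<^sub>D \<ast> f\<close>-mass, which is
  within \<open>2 d\<^sub>T\<^sub>V\<close> of its uniform mass.\<close>

lemma sum_translates_le:
  assumes D: "finite D" "D \<subseteq> vecs n" "D \<noteq> {}" "\<And>a b. a \<in> D \<Longrightarrow> b \<in> D \<Longrightarrow> vadd a b \<in> D"
    and "finite B"
  shows "(\<Sum>x\<in>translates n D B. f x)
           \<le> real (card D) * real (card B) / 2 ^ n + 2 * dTV n (conv n (unif_on D) f) (unif_on (vecs n))"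
proof -
  let ?N = "translates n D B"
  have N: "?N \<subseteq> vecs n" unfolding translates_def by auto
  have "vadd x c \<in> ?N" if "x \<in> ?N" "c \<in> D" for x c
  proof -
    obtain c' where "c' \<in> D" "vadd x c' \<in> B" using \<open>x \<in> ?N\<close> unfolding translates_def by auto
    then have "vadd (vadd x c) (vadd c c') \<in> B" "vadd c c' \<in> D" using D(4) \<open>c \<in> D\<close> vadd_vadd_eq by auto
    with that D(2) show ?thesis unfolding translates_def by (auto intro: vadd_in_vecs)
  qed
  then have "(\<Sum>x\<in>?N. f x) = (\<Sum>x\<in>?N. conv n (unif_on D) f x)"
    using D finite_subset[OF N finite_vecs] by (intro sum_conv_unif_on_invariant[symmetric]) auto
  also have "\<dots> \<le> real (card ?N) / 2 ^ n + 2 * dTV n (conv n (unif_on D) f) (unif_on (vecs n))"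
    using sum_le_sum_plus_dTV[OF N] sum_unif_on_vecs[OF N] by metis
  also have "real (card ?N) \<le> real (card D) * real (card B)"
    using card_translates_le[OF D(1) \<open>finite B\<close>] by (metis of_nat_le_iff of_nat_mult)
  finally show ?thesis by (simp add: divide_right_mono)
qed

lemma sum_translates_dual_code_le:
  assumes "1 \<le> n"
  shows "(\<Sum>x\<in>translates n (dual_code n C) (two_sided_ball n t). f x)
           \<le> real (card (dual_code n C)) * real (hball_vol n t) / 2 ^ (n - 1)
             + 2 * dTV n (conv n (unif_on (dual_code n C)) f) (unif_on (vecs n))"
proof -
  have "finite (two_sided_ball n t)" unfolding two_sided_ball_def by (simp add: finite_vecs)
  then have "(\<Sum>x\<in>translates n (dual_code n C) (two_sided_ball n t). f x)
      \<le> real (card (dual_code n C)) * real (card (two_sided_ball n t)) / 2 ^ n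
        + 2 * dTV n (conv n (unif_on (dual_code n C)) f) (unif_on (vecs n))"
    using finite_dual_code dual_code_subset_vecs vzero_in_dual_code[of n C] vadd_in_dual_code
    by (intro sum_translates_le) auto
  moreover have "real (card (dual_code n C)) * real (card (two_sided_ball n t)) / 2 ^ n
      \<le> real (card (dual_code n C)) * (2 * real (hball_vol n t)) / 2 ^ n"
    using card_two_sided_ball[of n t] by (intro divide_right_mono mult_left_mono) simp_all
  moreover have "real (card (dual_code n C)) * (2 * real (hball_vol n t)) / 2 ^ n
      = real (card (dual_code n C)) * real (hball_vol n t) / 2 ^ (n - 1)"
    using \<open>1 \<le> n\<close> by (cases n) simp_all
  ultimately show ?thesis by linarith
qed

lemma abs_krawtchouk_outside_translates_le:
  fixes A q :: real
  assumes decay: "\<And>j. real j \<le> real n / 2 \<Longrightarrow> \<bar>krawtchouk n w j\<bar> \<le> A * q ^ j"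
    and "0 \<le> A" "0 \<le> q" "q \<le> 1" and "vzero \<in> D"
    and y: "y \<in> vecs n - translates n D (two_sided_ball n t)"
  shows "\<bar>krawtchouk n w (hweight n y)\<bar> \<le> A * q ^ t"
proof -
  have "y \<notin> two_sided_ball n t" using y \<open>vzero \<in> D\<close> unfolding translates_def by force
  then show ?thesis using y assms(2-4)
    by (intro abs_krawtchouk_le_of_reflected_decay[OF decay]) (auto simp: two_sided_ball_def)
qed

lemma sum_pmf_krawtchouk_le:
  assumes "is_pmf n \<rho>" "N \<subseteq> vecs n" and "0 \<le> b"
    and far: "\<And>y. y \<in> vecs n - N \<Longrightarrow> \<bar>krawtchouk n w (hweight n y)\<bar> \<le> b"
  shows "(\<Sum>y\<in>vecs n. \<rho> y * krawtchouk n w (hweight n y)) \<le> b + real (n choose w) * (\<Sum>y\<in>N. \<rho> y)"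
proof -
  have pmf: "\<And>x. 0 \<le> \<rho> x" "(\<Sum>x\<in>vecs n. \<rho> x) = 1" using assms(1) unfolding is_pmf_def by auto
  have "(\<Sum>y\<in>vecs n. \<rho> y * krawtchouk n w (hweight n y))
      = (\<Sum>y\<in>vecs n - N. \<rho> y * krawtchouk n w (hweight n y)) + (\<Sum>y\<in>N. \<rho> y * krawtchouk n w (hweight n y))"
    by (rule sum.subset_diff[OF assms(2) finite_vecs])
  also have "\<dots> \<le> (\<Sum>y\<in>vecs n - N. \<rho> y * b) + (\<Sum>y\<in>N. \<rho> y * real (n choose w))"
    using abs_le_D1[OF far] abs_le_D1[OF abs_krawtchouk_le_binomial[OF hweight_le]] pmf(1)
    by (intro add_mono sum_mono mult_left_mono) auto
  also have "(\<Sum>y\<in>vecs n - N. \<rho> y) \<le> 1"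
    using pmf sum_mono2[OF finite_vecs[of n], where A = "vecs n - N" and f = \<rho>] by auto
  then have "(\<Sum>y\<in>vecs n - N. \<rho> y * b) \<le> b"
    using mult_right_mono[OF _ \<open>0 \<le> b\<close>] by (fastforce simp: sum_distrib_right[symmetric])
  finally show ?thesis by (simp add: sum_distrib_right mult.commute)
qed

theorem mainTheorem3:
  fixes c K0 :: real and n w :: nat and Cd :: "(nat \<Rightarrow> bool) set"
    and \<epsilon> :: real and \<rho> :: "(nat \<Rightarrow> bool) \<Rightarrow> real"
  assumes hc: "0 < c" "c < 1" and hK0: "K0 \<ge> 1"
    and hK: "\<And>m v i. m \<ge> 1 \<Longrightarrow> real v \<le> c * real m \<Longrightarrow> real i \<le> real m / 2 \<Longrightarrow>
              \<bar>krawtchouk m v i\<bar> \<le> K0 * real (m choose v) * (1 - 2 * real v / real m) ^ i"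
    and hC: "linear_code n Cd"
    and hdual: "dual_code n Cd \<noteq> {vzero}"
    and hd: "real (dual_distance n Cd) < real n / 2"
    and hw: "real w \<le> c * real n"
    and he: "\<epsilon> > 0"
    and hrho: "is_pmf n \<rho>"
    and htv: "dTV n (conv n (unif_on (dual_code n Cd)) \<rho>) (unif_on (vecs n)) \<le> \<epsilon>"
  shows "(let t = (dual_distance n Cd - 1) div 2 in
          1 / real (n choose w) * (\<Sum>x\<in>{x \<in> vecs n. hweight n x = w}. 2 ^ n * fourier n \<rho> x)
          \<le> real (card (dual_code n Cd)) * real (hball_vol n t) / 2 ^ (n - 1)
             + K0 * real n * (1 - 2 * real w / real n) ^ t + 2 * \<epsilon>)"
proof -
  define t where "t = (dual_distance n Cd - 1) div 2"
  define N where "N = translates n (dual_code n Cd) (two_sided_ball n t)"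
  define q where "q = 1 - 2 * real w / real n"
  define b where "b = real (n choose w)"
  have "1 \<le> n" using hd by (cases n) auto
  moreover have "real w < real n"
    using hw mult_strict_right_mono[OF hc(2), of "real n"] \<open>1 \<le> n\<close> by linarith
  ultimately have "0 < b" unfolding b_def by simp
  have decay: "\<And>j. real j \<le> real n / 2 \<Longrightarrow> \<bar>krawtchouk n w j\<bar> \<le> K0 * b * q ^ j"
    using hK[OF \<open>1 \<le> n\<close> hw] unfolding b_def q_def .
  have "0 \<le> q" unfolding q_def
    using \<open>0 < b\<close> hK0 \<open>real w < real n\<close> by (intro krawtchouk_decay_ratio_nonneg[OF decay[unfolded q_def]]) auto
  have "(\<Sum>y\<in>vecs n. \<rho> y * krawtchouk n w (hweight n y)) \<le> K0 * b * q ^ t + b * (\<Sum>x\<in>N. \<rho> x)"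
    using \<open>0 \<le> q\<close> \<open>0 < b\<close> hK0 vzero_in_dual_code unfolding b_def N_def
    by (intro sum_pmf_krawtchouk_le[OF hrho] abs_krawtchouk_outside_translates_le[OF decay[unfolded b_def]])
      (auto simp: translates_def q_def)
  also have "\<dots> \<le> b * (K0 * real n * q ^ t + (\<Sum>x\<in>N. \<rho> x))"
  proof -
    have "K0 * q ^ t \<le> K0 * (real n * q ^ t)"
      using \<open>0 \<le> q\<close> \<open>1 \<le> n\<close> hK0 by (intro mult_left_mono) (simp_all add: mult_le_cancel_right1)
    then show ?thesis using mult_left_mono[of _ _ b] \<open>0 < b\<close> by (fastforce simp: algebra_simps)
  qed
  finally have "1 / b * (\<Sum>y\<in>vecs n. \<rho> y * krawtchouk n w (hweight n y)) \<le> K0 * real n * q ^ t + (\<Sum>x\<in>N. \<rho> x)"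
    using \<open>0 < b\<close> by (simp add: field_simps)
  then show ?thesis
    using sum_translates_dual_code_le[OF \<open>1 \<le> n\<close>, where C = Cd and t = t and f = \<rho>] htv
    unfolding sum_fourier_vecs_weight Let_def t_def[symmetric] N_def[symmetric] q_def[symmetric] b_def[symmetric]
    by linarith
qed

end
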